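(* Consider four qubits labelled $\alpha,\beta,1,2$ with Hamiltonian $$H=\frac{h_\alpha}{2}(X_\alpha X_\beta+Y_\alpha Y_\beta)+\frac{h_\beta}{2}(X_\beta X_1+Y_\beta Y_1)+\frac{h_1}{2}(X_1X_2+Y_1Y_2),$$ initial state $\rho_0=\frac I2\otimes\frac{I+X}{2}\otimes\frac I2\otimes\frac I2$ (qubit $\beta$ in the $+1$ eigenstate of $X$, all other qubits maximally mixed), and output $y_h(t)=\operatorname{Tr}\big(Y_\alpha Z_\beta\,e^{-\mathrm{i}Ht}\rho_0e^{\mathrm{i}Ht}\big)$, $t\ge0$, where $h=(h_\alpha,h_\beta,h_1)\in\mathbb{R}^3$. Then for almost every pair $h,h'\in\mathbb{R}^3$ (outside a Lebesgue-null set), $y_h(t)=y_{h'}(t)$ for all $t\ge0$ implies $h_\alpha=h'_\alpha$, $h_\beta^2=h_\beta'^2$ and $h_1^2=h_1'^2$; that is, all parameters are identifiable in magnitude from measurements of $Y_\alpha Z_\beta$.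
   Context: $X,Y,Z$ denote the Pauli matrices $\sigma_x=\begin{pmatrix}0&1\\1&0\end{pmatrix}$, $\sigma_y=\begin{pmatrix}0&-\mathrm{i}\\ \mathrm{i}&0\end{pmatrix}$, $\sigma_z=\begin{pmatrix}1&0\\0&-1\end{pmatrix}$; a subscript indicates the qubit acted on, with identity on the other qubits (tensor products suppressed). $\hbar=1$. Equivalently, $y_h(t)=Ce^{At}B$ where $A$ is the $24\times24$ matrix of the Heisenberg dynamics $\frac{d}{dt}\langle O\rangle=\langle\mathrm{i}[H,O]\rangle$ on the expectations of the 24 Pauli strings generated from $Y_\alpha Z_\beta$, $B$ is the vector of initial expectations (equal to $1$ at $X_\beta$, $0$ elsewhere) and $C$ selects $\langle Y_\alpha Z_\beta\rangle$. *)

theory Defs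
  imports "HOL-Analysis.Analysis"
begin

text \<open>Operators on the 4-qubit Hilbert space C^16, represented as functions
  nat => nat => complex whose relevant entries are indexed by 0..15.
  Qubit q (q = 0,1,2,3 for alpha, beta, 1, 2) of basis index i is bit q of i.\<close>

type_synonym cmat = "nat \<Rightarrow> nat \<Rightarrow> complex"

definition dim4 :: nat where "dim4 = 16"

definition qbit :: "nat \<Rightarrow> nat \<Rightarrow> nat" where
  "qbit q i = (i div 2 ^ q) mod 2"

definition pI :: cmat where "pI a b = (if a = b then 1 else 0)"
definition pX :: cmat where "pX a b = (if a \<noteq> b then 1 else 0)"
definition pY :: cmat where
  "pY a b = (if a = 0 \<and> b = 1 then - \<i> else if a = 1 \<and> b = 0 then \<i> else 0)"
definition pZ :: cmat where
  "pZ a b = (if a = b then (if a = 0 then 1 else -1) else 0)"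

definition tensor4 :: "cmat \<Rightarrow> cmat \<Rightarrow> cmat \<Rightarrow> cmat \<Rightarrow> cmat" where
  "tensor4 A B C D = (\<lambda>i j. A (qbit 0 i) (qbit 0 j) * B (qbit 1 i) (qbit 1 j)
                         * C (qbit 2 i) (qbit 2 j) * D (qbit 3 i) (qbit 3 j))"

definition madd :: "cmat \<Rightarrow> cmat \<Rightarrow> cmat" where
  "madd A B = (\<lambda>i j. A i j + B i j)"

definition smul :: "complex \<Rightarrow> cmat \<Rightarrow> cmat" where
  "smul c A = (\<lambda>i j. c * A i j)"

definition mmul :: "cmat \<Rightarrow> cmat \<Rightarrow> cmat" where
  "mmul A B = (\<lambda>i j. \<Sum>k<dim4. A i k * B k j)"

definition mid :: cmat where "mid = (\<lambda>i j. if i = j then 1 else 0)"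

fun mpow :: "cmat \<Rightarrow> nat \<Rightarrow> cmat" where
  "mpow A 0 = mid"
| "mpow A (Suc n) = mmul A (mpow A n)"

definition mexp :: "cmat \<Rightarrow> cmat" where
  "mexp A = (\<lambda>i j. \<Sum>n. mpow A n i j / of_nat (fact n))"

definition mtrace :: "cmat \<Rightarrow> complex" where
  "mtrace A = (\<Sum>i<dim4. A i i)"

definition Ham :: "real \<times> real \<times> real \<Rightarrow> cmat" where
  "Ham h = (case h of (ha, hb, h1) \<Rightarrow>
     madd (smul (complex_of_real (ha / 2)) (madd (tensor4 pX pX pI pI) (tensor4 pY pY pI pI)))
    (madd (smul (complex_of_real (hb / 2)) (madd (tensor4 pI pX pX pI) (tensor4 pI pY pY pI)))
          (smul (complex_of_real (h1 / 2)) (madd (tensor4 pI pI pX pX) (tensor4 pI pI pY pY)))))"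

definition rho0 :: cmat where
  "rho0 = tensor4 (smul (1/2) pI) (smul (1/2) (madd pI pX)) (smul (1/2) pI) (smul (1/2) pI)"

definition yout :: "real \<times> real \<times> real \<Rightarrow> real \<Rightarrow> complex" where
  "yout h t = mtrace (mmul (tensor4 pY pZ pI pI)
       (mmul (mexp (smul (- \<i> * complex_of_real t) (Ham h)))
         (mmul rho0 (mexp (smul (\<i> * complex_of_real t) (Ham h))))))"

end

theory Submission
  imports Defs
begin

text \<open>The n-th derivative of \<open>y\<^sub>h\<close> at \<open>t = 0\<close> is the moment
  \<open>Tr (L\<^sub>h\<^sup>n (Y\<^sub>\<alpha> Z\<^sub>\<beta>) \<rho>\<^sub>0)\<close>, where \<open>L\<^sub>h M = i[H, M]\<close> generates the Heisenberg dynamics.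
  Since \<open>y\<^sub>h\<close> is smooth, outputs that agree for \<open>t \<ge> 0\<close> have equal moments. Expanding
  \<open>L\<^sub>h\<^sup>n (Y\<^sub>\<alpha> Z\<^sub>\<beta>)\<close> in Pauli strings is a finite computation; the moments of order 1, 3, 5 are
  \<open>-h\<^sub>\<alpha>\<close>, \<open>h\<^sub>\<alpha>\<^sup>3 + 4 h\<^sub>\<alpha> h\<^sub>\<beta>\<^sup>2\<close> and
  \<open>-(h\<^sub>\<alpha>\<^sup>5 + 17 h\<^sub>\<alpha>\<^sup>3 h\<^sub>\<beta>\<^sup>2 + 16 h\<^sub>\<alpha> h\<^sub>\<beta>\<^sup>4 + 6 h\<^sub>\<alpha> h\<^sub>\<beta>\<^sup>2 h\<^sub>1\<^sup>2)\<close>.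
  They determine \<open>h\<^sub>\<alpha>\<close>, \<open>h\<^sub>\<beta>\<^sup>2\<close> and \<open>h\<^sub>1\<^sup>2\<close> whenever \<open>h\<^sub>\<alpha> h\<^sub>\<beta> \<noteq> 0\<close>, and the remaining
  pairs lie in the union of two hyperplanes.\<close>

lemma qbit_less_2 [simp]: "qbit q i < 2"
  by (simp add: qbit_def)

lemma sum_lessThan_16_qbits:
  "(\<Sum>k<16. f (qbit 0 k) (qbit 1 k) (qbit 2 k) (qbit 3 k)) =
   (\<Sum>a<2. \<Sum>b<2. \<Sum>c<2. \<Sum>d<2. f a b c d)"
proof -
  have "qbit 0 k = k mod 2" "qbit 1 k = k div 2 mod 2"
       "qbit 2 k = k div 4 mod 2" "qbit 3 k = k div 8 mod 2" for k
    by (simp_all add: qbit_def)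
  then show ?thesis
    by (simp add: lessThan_nat_numeral add_ac)
qed

definition mzero :: cmat where
  "mzero = (\<lambda>i j. 0)"

lemma mmul_madd_left: "mmul (madd A B) C = madd (mmul A C) (mmul B C)"
  by (simp add: fun_eq_iff mmul_def madd_def distrib_right sum.distrib)

lemma mmul_madd_right: "mmul C (madd A B) = madd (mmul C A) (mmul C B)"
  by (simp add: fun_eq_iff mmul_def madd_def distrib_left sum.distrib)

lemma mmul_smul_left: "mmul (smul c A) B = smul c (mmul A B)"
  by (simp add: fun_eq_iff mmul_def smul_def sum_distrib_left mult.assoc)

lemma mmul_smul_right: "mmul A (smul c B) = smul c (mmul A B)"
  by (simp add: fun_eq_iff mmul_def smul_def sum_distrib_left ac_simps)

lemma mmul_zero_left: "mmul mzero B = mzero"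
  by (simp add: fun_eq_iff mmul_def mzero_def)

lemma mmul_zero_right: "mmul B mzero = mzero"
  by (simp add: fun_eq_iff mmul_def mzero_def)

lemma mmul_assoc: "mmul (mmul A B) C = mmul A (mmul B C)"
  unfolding fun_eq_iff mmul_def sum_distrib_right sum_distrib_left mult.assoc
  by (auto intro: sum.swap)

lemma mtrace_madd: "mtrace (madd A B) = mtrace A + mtrace B"
  by (simp add: mtrace_def madd_def sum.distrib)

lemma mtrace_smul: "mtrace (smul c A) = c * mtrace A"
  by (simp add: mtrace_def smul_def sum_distrib_left)

lemma mtrace_zero: "mtrace mzero = 0"
  by (simp add: mtrace_def mzero_def)

lemma mtrace_mmul_commute: "mtrace (mmul A B) = mtrace (mmul B A)"
  unfolding mtrace_def mmul_def by (subst sum.swap) (simp add: mult.commute)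

lemma mtrace_mmul_cong:
  "(\<And>i j. i < dim4 \<Longrightarrow> j < dim4 \<Longrightarrow> A i j = B i j) \<Longrightarrow> mtrace (mmul M A) = mtrace (mmul M B)"
  unfolding mtrace_def mmul_def by (intro sum.cong) auto

lemma sum_mid_mult: "i < dim4 \<Longrightarrow> (\<Sum>k<dim4. mid i k * f k) = f i"
proof -
  have "mid i k * f k = (if i = k then f k else 0)" for k
    by (simp add: mid_def)
  then show "i < dim4 \<Longrightarrow> ?thesis"
    by (simp add: sum.delta)
qed

lemma sum_mult_mid: "j < dim4 \<Longrightarrow> (\<Sum>k<dim4. f k * mid k j) = f j"
proof -
  have "f k * mid k j = (if j = k then f k else 0)" for k
    by (simp add: mid_def)
  then show "j < dim4 \<Longrightarrow> ?thesis"
    by (simp add: sum.delta)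
qed

lemma mpow_Suc_right:
  "i < dim4 \<Longrightarrow> j < dim4 \<Longrightarrow> mpow A (Suc n) i j = (\<Sum>k<dim4. mpow A n i k * A k j)"
proof (induction n arbitrary: i)
  case 0
  then show ?case by (simp add: mmul_def sum_mid_mult sum_mult_mid)
next
  case (Suc n)
  have "mpow A (Suc (Suc n)) i j = (\<Sum>k<dim4. A i k * (\<Sum>l<dim4. mpow A n k l * A l j))"
    using Suc by (simp add: mmul_def)
  also have "\<dots> = (\<Sum>l<dim4. (\<Sum>k<dim4. A i k * mpow A n k l) * A l j)"
    unfolding sum_distrib_left sum_distrib_right mult.assoc by (rule sum.swap)
  finally show ?case by (simp add: mmul_def)
qed

lemma mpow_smul: "mpow (smul c A) n = smul (c ^ n) (mpow A n)"
  by (induction n) (simp_all add: smul_def mid_def fun_eq_iff mmul_def sum_distrib_left ac_simps)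

lemma mmul_tensor4:
  "mmul (tensor4 A B C D) (tensor4 A' B' C' D') i j =
     (\<Sum>a<2. A (qbit 0 i) a * A' a (qbit 0 j)) * (\<Sum>b<2. B (qbit 1 i) b * B' b (qbit 1 j)) *
     (\<Sum>c<2. C (qbit 2 i) c * C' c (qbit 2 j)) * (\<Sum>d<2. D (qbit 3 i) d * D' d (qbit 3 j))"
proof -
  have "mmul (tensor4 A B C D) (tensor4 A' B' C' D') i j =
    (\<Sum>a<2. \<Sum>b<2. \<Sum>c<2. \<Sum>d<2.
       (A (qbit 0 i) a * A' a (qbit 0 j)) * (B (qbit 1 i) b * B' b (qbit 1 j)) *
       (C (qbit 2 i) c * C' c (qbit 2 j)) * (D (qbit 3 i) d * D' d (qbit 3 j)))"
    unfolding mmul_def tensor4_def dim4_def sum_lessThan_16_qbits[symmetric]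
    by (rule sum.cong) (simp_all add: ac_simps)
  then show ?thesis
    by (simp add: lessThan_nat_numeral algebra_simps)
qed

section \<open>Pauli strings\<close>

datatype pauli = PI | PX | PY | PZ

fun pauli_mat :: "pauli \<Rightarrow> cmat" where
  "pauli_mat PI = pI"
| "pauli_mat PX = pX"
| "pauli_mat PY = pY"
| "pauli_mat PZ = pZ"

text \<open>\<open>pauli_mult p q = (k, r)\<close> encodes \<open>p q = i\<^sup>k r\<close>.\<close>

fun pauli_mult :: "pauli \<Rightarrow> pauli \<Rightarrow> nat \<times> pauli" where
  "pauli_mult PI q = (0, q)"
| "pauli_mult p PI = (0, p)"
| "pauli_mult PX PX = (0, PI)"
| "pauli_mult PY PY = (0, PI)"
| "pauli_mult PZ PZ = (0, PI)"
| "pauli_mult PX PY = (1, PZ)"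
| "pauli_mult PY PX = (3, PZ)"
| "pauli_mult PY PZ = (1, PX)"
| "pauli_mult PZ PY = (3, PX)"
| "pauli_mult PZ PX = (1, PY)"
| "pauli_mult PX PZ = (3, PY)"

text \<open>The powers of \<open>\<i>\<close>, defined by cases so that the simplifier evaluates them.\<close>

definition phase :: "nat \<Rightarrow> complex" where
  "phase k = (if k mod 4 = 0 then 1 else if k mod 4 = 1 then \<i> else if k mod 4 = 2 then -1 else -\<i>)"

lemma phase_eq_power: "phase k = \<i> ^ k"
proof -
  have "\<i> ^ (4 * m + r) = \<i> ^ r" for m r
    by (simp only: power_add power_mult) (simp add: eval_nat_numeral)
  from this[of "k div 4" "k mod 4"] have "\<i> ^ k = \<i> ^ (k mod 4)"
    by simp
  moreover have "k mod 4 = 0 \<or> k mod 4 = 1 \<or> k mod 4 = 2 \<or> k mod 4 = 3"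
    by linarith
  ultimately show ?thesis
    unfolding phase_def by (auto simp: power2_eq_square power3_eq_cube)
qed

lemma phase_add: "phase (a + b) = phase a * phase b"
  by (simp add: phase_eq_power power_add)

lemma phase_mod_4: "phase (k mod 4) = phase k"
  by (simp add: phase_def)

lemma sum_pauli_mat_mult:
  "a < 2 \<Longrightarrow> b < 2 \<Longrightarrow>
   (\<Sum>c<2. pauli_mat p a c * pauli_mat q c b) =
     phase (fst (pauli_mult p q)) * pauli_mat (snd (pauli_mult p q)) a b"
  by (cases p; cases q)
     (auto simp: less_2_cases_iff pI_def pX_def pY_def pZ_def phase_def lessThan_nat_numeral)

lemma snd_pauli_mult_commute: "snd (pauli_mult p q) = snd (pauli_mult q p)"
  by (cases p; cases q) auto

type_synonym pstring = "pauli \<times> pauli \<times> pauli \<times> pauli"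

fun pstring_mat :: "pstring \<Rightarrow> cmat" where
  "pstring_mat (a, b, c, d) = tensor4 (pauli_mat a) (pauli_mat b) (pauli_mat c) (pauli_mat d)"

fun pstring_mult :: "pstring \<Rightarrow> pstring \<Rightarrow> nat \<times> pstring" where
  "pstring_mult (a, b, c, d) (a', b', c', d') =
     (fst (pauli_mult a a') + fst (pauli_mult b b') + fst (pauli_mult c c') + fst (pauli_mult d d'),
      (snd (pauli_mult a a'), snd (pauli_mult b b'), snd (pauli_mult c c'), snd (pauli_mult d d')))"

lemma snd_pstring_mult_commute: "snd (pstring_mult s t) = snd (pstring_mult t s)"
  by (cases s; cases t) (auto simp: snd_pauli_mult_commute)

lemma mmul_pstring_mat:
  "mmul (pstring_mat s) (pstring_mat t) =
     smul (phase (fst (pstring_mult s t))) (pstring_mat (snd (pstring_mult s t)))"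
  by (cases s; cases t)
     (simp only: pstring_mat.simps fun_eq_iff mmul_tensor4 sum_pauli_mat_mult[OF qbit_less_2 qbit_less_2],
      simp add: smul_def tensor4_def phase_add)

lemma norm_pstring_mat_le_1: "norm (pstring_mat s i j) \<le> 1"
proof -
  have "norm (pauli_mat p a b) \<le> 1" for p a b
    by (cases p) (auto simp: pI_def pX_def pY_def pZ_def)
  then show ?thesis
    by (cases s) (auto simp: tensor4_def norm_mult intro!: mult_le_one)
qed

fun pauli_sum :: "(complex \<times> pstring) list \<Rightarrow> cmat" where
  "pauli_sum [] = mzero"
| "pauli_sum ((c, s) # xs) = madd (smul c (pstring_mat s)) (pauli_sum xs)"

lemma pauli_sum_append: "pauli_sum (xs @ ys) = madd (pauli_sum xs) (pauli_sum ys)"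
  by (induction xs rule: pauli_sum.induct) (auto simp: fun_eq_iff madd_def mzero_def)

definition scale_terms :: "complex \<Rightarrow> (complex \<times> pstring) list \<Rightarrow> (complex \<times> pstring) list" where
  "scale_terms c ys = map (\<lambda>(d, q). (c * d, q)) ys"

lemma pauli_sum_scale_terms: "pauli_sum (scale_terms c ys) = smul c (pauli_sum ys)"
  unfolding scale_terms_def
  by (induction ys rule: pauli_sum.induct)
     (auto simp: fun_eq_iff madd_def mzero_def smul_def algebra_simps)

lemma norm_pauli_sum_le: "norm (pauli_sum xs i j) \<le> (\<Sum>(c, s)\<leftarrow>xs. norm c)"
proof (induction xs rule: pauli_sum.induct)
  case 1
  then show ?case by (simp add: mzero_def)
next
  case (2 c s xs)
  have "norm (pauli_sum ((c, s) # xs) i j) \<le> norm c * norm (pstring_mat s i j) + norm (pauli_sum xs i j)"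
    by (simp add: madd_def smul_def) (metis norm_mult norm_triangle_ineq)
  also have "\<dots> \<le> norm c * 1 + (\<Sum>(c, s)\<leftarrow>xs. norm c)"
    by (intro add_mono mult_left_mono norm_pstring_mat_le_1 2) simp
  finally show ?case by simp
qed

fun add_term :: "complex \<times> pstring \<Rightarrow> (complex \<times> pstring) list \<Rightarrow> (complex \<times> pstring) list" where
  "add_term x [] = [x]"
| "add_term (c, s) ((d, t) # xs) =
     (if s = t then (c + d, t) # xs else (d, t) # add_term (c, s) xs)"

lemma pauli_sum_add_term: "pauli_sum (add_term (c, s) xs) = madd (smul c (pstring_mat s)) (pauli_sum xs)"
  by (induction "(c, s)" xs rule: add_term.induct) (auto simp: fun_eq_iff madd_def smul_def algebra_simps)

text \<open>Merging equal strings keeps the iterates of the generator small enough to evaluate by simp.\<close>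

definition collect_terms :: "(complex \<times> pstring) list \<Rightarrow> (complex \<times> pstring) list" where
  "collect_terms xs = foldr add_term xs []"

lemma pauli_sum_collect_terms: "pauli_sum (collect_terms xs) = pauli_sum xs"
  unfolding collect_terms_def
  by (induction xs rule: pauli_sum.induct) (auto simp: pauli_sum_add_term)

section \<open>The Heisenberg generator\<close>

definition Ham_terms :: "real \<times> real \<times> real \<Rightarrow> (complex \<times> pstring) list" where
  "Ham_terms h = (case h of (ha, hb, h1) \<Rightarrow>
    [(complex_of_real (ha/2), (PX, PX, PI, PI)), (complex_of_real (ha/2), (PY, PY, PI, PI)),
     (complex_of_real (hb/2), (PI, PX, PX, PI)), (complex_of_real (hb/2), (PI, PY, PY, PI)),
     (complex_of_real (h1/2), (PI, PI, PX, PX)), (complex_of_real (h1/2), (PI, PI, PY, PY))])"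

lemma Ham_eq_pauli_sum: "Ham h = pauli_sum (Ham_terms h)"
  by (cases h) (simp add: Ham_def Ham_terms_def fun_eq_iff madd_def smul_def mzero_def algebra_simps)

lemma Ham_entries_bounded: "\<exists>K. \<forall>i j. norm (Ham h i j) \<le> K"
  using norm_pauli_sum_le[of "Ham_terms h"] unfolding Ham_eq_pauli_sum by blast

definition icomm :: "cmat \<Rightarrow> cmat \<Rightarrow> cmat" where
  "icomm A M = madd (smul \<i> (mmul A M)) (smul (-\<i>) (mmul M A))"

definition heisenberg :: "real \<times> real \<times> real \<Rightarrow> cmat \<Rightarrow> cmat" where
  "heisenberg h = icomm (Ham h)"

text \<open>Two Pauli strings either commute, or anticommute and then \<open>i[t, s]\<close> is again a multiple
  of a single Pauli string.\<close>

definition icomm_term :: "complex \<times> pstring \<Rightarrow> pstring \<Rightarrow> (complex \<times> pstring) list" where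
  "icomm_term dt s = (case dt of (d, t) \<Rightarrow>
     (if fst (pstring_mult t s) mod 4 = fst (pstring_mult s t) mod 4 then []
      else [(\<i> * d * (phase (fst (pstring_mult t s)) - phase (fst (pstring_mult s t))),
             snd (pstring_mult t s))]))"

lemma icomm_term_correct:
  "icomm (smul d (pstring_mat t)) (pstring_mat s) = pauli_sum (icomm_term (d, t) s)"
proof -
  have snd_eq: "snd (pstring_mult s t) = snd (pstring_mult t s)"
    by (rule snd_pstring_mult_commute)
  show ?thesis
  proof (cases "fst (pstring_mult t s) mod 4 = fst (pstring_mult s t) mod 4")
    case True
    then have "phase (fst (pstring_mult t s)) = phase (fst (pstring_mult s t))"
      by (metis phase_mod_4)
    with True show ?thesis
      by (simp only: icomm_def mmul_smul_left mmul_smul_right mmul_pstring_mat snd_eq)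
         (simp add: icomm_term_def fun_eq_iff madd_def smul_def mzero_def algebra_simps)
  next
    case False
    then show ?thesis
      by (simp only: icomm_def mmul_smul_left mmul_smul_right mmul_pstring_mat snd_eq)
         (simp add: icomm_term_def fun_eq_iff madd_def smul_def mzero_def algebra_simps)
  qed
qed

lemma icomm_madd_left: "icomm (madd A B) M = madd (icomm A M) (icomm B M)"
  by (simp only: icomm_def mmul_madd_left mmul_madd_right)
     (simp add: fun_eq_iff madd_def smul_def algebra_simps)

lemma icomm_madd_right: "icomm A (madd M N) = madd (icomm A M) (icomm A N)"
  by (simp only: icomm_def mmul_madd_left mmul_madd_right)
     (simp add: fun_eq_iff madd_def smul_def algebra_simps)

lemma icomm_smul_right: "icomm A (smul c M) = smul c (icomm A M)"
  by (simp only: icomm_def mmul_smul_left mmul_smul_right)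
     (simp add: fun_eq_iff madd_def smul_def algebra_simps)

lemma icomm_zero_left: "icomm mzero M = mzero"
  by (simp only: icomm_def mmul_zero_left mmul_zero_right)
     (simp add: fun_eq_iff madd_def smul_def mzero_def)

lemma icomm_zero_right: "icomm A mzero = mzero"
  by (simp only: icomm_def mmul_zero_left mmul_zero_right)
     (simp add: fun_eq_iff madd_def smul_def mzero_def)

definition icomm_terms :: "(complex \<times> pstring) list \<Rightarrow> pstring \<Rightarrow> (complex \<times> pstring) list" where
  "icomm_terms K s = concat (map (\<lambda>dt. icomm_term dt s) K)"

lemma icomm_terms_correct: "icomm (pauli_sum K) (pstring_mat s) = pauli_sum (icomm_terms K s)"
  by (induction K rule: pauli_sum.induct)
     (simp_all add: icomm_terms_def icomm_zero_left icomm_madd_left icomm_term_correct pauli_sum_append)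

definition heisenberg_step :: "real \<times> real \<times> real \<Rightarrow> (complex \<times> pstring) list \<Rightarrow> (complex \<times> pstring) list" where
  "heisenberg_step h xs =
     collect_terms (concat (map (\<lambda>(c, s). scale_terms c (icomm_terms (Ham_terms h) s)) xs))"

lemma heisenberg_pauli_sum: "heisenberg h (pauli_sum xs) = pauli_sum (heisenberg_step h xs)"
proof -
  have "heisenberg h (pauli_sum xs) =
        pauli_sum (concat (map (\<lambda>(c, s). scale_terms c (icomm_terms (Ham_terms h) s)) xs))"
    by (induction xs rule: pauli_sum.induct)
       (simp_all add: heisenberg_def Ham_eq_pauli_sum icomm_zero_right icomm_madd_right
          icomm_smul_right icomm_terms_correct pauli_sum_append pauli_sum_scale_terms)
  then show ?thesis
    by (simp add: heisenberg_step_def pauli_sum_collect_terms)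
qed

lemma funpow_heisenberg_pauli_sum:
  "(heisenberg h ^^ n) (pauli_sum xs) = pauli_sum ((heisenberg_step h ^^ n) xs)"
  by (induction n) (auto simp: heisenberg_pauli_sum)

definition moment :: "real \<times> real \<times> real \<Rightarrow> nat \<Rightarrow> complex" where
  "moment h n = mtrace (mmul ((heisenberg h ^^ n) (tensor4 pY pZ pI pI)) rho0)"

definition expect_mixed :: "pauli \<Rightarrow> complex" where
  "expect_mixed p = (\<Sum>x<2. \<Sum>y<2. pauli_mat p x y * smul (1/2) pI y x)"

definition expect_plus :: "pauli \<Rightarrow> complex" where
  "expect_plus p = (\<Sum>x<2. \<Sum>y<2. pauli_mat p x y * smul (1/2) (madd pI pX) y x)"

lemma expect_mixed_simps [simp]:
  "expect_mixed PI = 1" "expect_mixed PX = 0" "expect_mixed PY = 0" "expect_mixed PZ = 0"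
  by (simp_all add: expect_mixed_def smul_def pI_def pX_def pY_def pZ_def lessThan_nat_numeral)

lemma expect_plus_simps [simp]:
  "expect_plus PI = 1" "expect_plus PX = 1" "expect_plus PY = 0" "expect_plus PZ = 0"
  by (simp_all add: expect_plus_def smul_def madd_def pI_def pX_def pY_def pZ_def lessThan_nat_numeral)

definition pstring_expect :: "pstring \<Rightarrow> complex" where
  "pstring_expect s = mtrace (mmul (pstring_mat s) rho0)"

lemma pstring_expect_eq:
  "pstring_expect (a, b, c, d) = expect_mixed a * expect_plus b * expect_mixed c * expect_mixed d"
proof -
  define g1 where "g1 u = (\<Sum>x<2. pauli_mat a u x * smul (1/2) pI x u)" for u
  define g2 where "g2 u = (\<Sum>x<2. pauli_mat b u x * smul (1/2) (madd pI pX) x u)" for u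
  define g3 where "g3 u = (\<Sum>x<2. pauli_mat c u x * smul (1/2) pI x u)" for u
  define g4 where "g4 u = (\<Sum>x<2. pauli_mat d u x * smul (1/2) pI x u)" for u
  have "pstring_expect (a, b, c, d) =
        (\<Sum>i<16. g1 (qbit 0 i) * g2 (qbit 1 i) * g3 (qbit 2 i) * g4 (qbit 3 i))"
    by (simp add: pstring_expect_def mtrace_def dim4_def rho0_def mmul_tensor4 g1_def g2_def g3_def g4_def)
  also have "\<dots> = (\<Sum>u<2. \<Sum>v<2. \<Sum>w<2. \<Sum>z<2. g1 u * g2 v * g3 w * g4 z)"
    by (rule sum_lessThan_16_qbits)
  also have "\<dots> = (\<Sum>u<2. g1 u) * (\<Sum>u<2. g2 u) * (\<Sum>u<2. g3 u) * (\<Sum>u<2. g4 u)"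
    by (simp add: lessThan_nat_numeral algebra_simps)
  finally show ?thesis
    by (simp add: expect_mixed_def expect_plus_def g1_def g2_def g3_def g4_def)
qed

lemma mtrace_pauli_sum_rho0: "mtrace (mmul (pauli_sum xs) rho0) = (\<Sum>(c, s)\<leftarrow>xs. c * pstring_expect s)"
  by (induction xs rule: pauli_sum.induct)
     (auto simp: mmul_zero_left mmul_madd_left mmul_smul_left mtrace_madd mtrace_smul mtrace_zero
        pstring_expect_def)

lemma moment_eq_sum:
  "moment h n = (\<Sum>(c, s)\<leftarrow>(heisenberg_step h ^^ n) [(1, (PY, PZ, PI, PI))]. c * pstring_expect s)"
proof -
  have "tensor4 pY pZ pI pI = pauli_sum [(1, (PY, PZ, PI, PI))]"
    by (simp add: fun_eq_iff madd_def smul_def mzero_def)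
  then show ?thesis
    by (simp only: moment_def funpow_heisenberg_pauli_sum mtrace_pauli_sum_rho0)
qed

lemmas moment_simps =
  moment_eq_sum heisenberg_step_def collect_terms_def icomm_terms_def icomm_term_def
  scale_terms_def Ham_terms_def phase_def pstring_expect_eq

lemma funpow_3: "(f ^^ 3) x = f (f (f x))"
  by (simp add: numeral_eq_Suc)

lemma funpow_5: "(f ^^ 5) x = f (f (f (f (f x))))"
  by (simp add: numeral_eq_Suc)

lemma moment_1: "moment (ha, hb, h1) 1 = complex_of_real (- ha)"
  by (simp add: moment_simps) (simp add: algebra_simps)

lemma moment_3: "moment (ha, hb, h1) 3 = complex_of_real (ha^3 + 4*ha*hb^2)"
  by (simp add: moment_simps funpow_3)
     (simp add: algebra_simps power2_eq_square power3_eq_cube)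

lemma moment_5:
  "moment (ha, hb, h1) 5 =
     complex_of_real (- (ha^5 + 17*ha^3*hb^2 + 16*ha*hb^4 + 6*ha*hb^2*h1^2))"
  by (simp add: moment_simps funpow_5)
     (simp add: algebra_simps power2_eq_square power3_eq_cube eval_nat_numeral)

section \<open>The matrix exponential\<close>

definition mexp_series :: "cmat \<Rightarrow> nat \<Rightarrow> nat \<Rightarrow> complex \<Rightarrow> complex" where
  "mexp_series A i j z = (\<Sum>n. (mpow A n i j / of_nat (fact n)) * z ^ n)"

lemma mexp_smul_eq_series: "mexp (smul z A) = (\<lambda>i j. mexp_series A i j z)"
  by (simp only: mexp_def mexp_series_def mpow_smul) (simp add: smul_def ac_simps)

lemma norm_mpow_le:
  assumes "\<And>i j. norm (A i j) \<le> K"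
  shows "norm (mpow A n i j) \<le> (16 * K) ^ n"
proof (induction n arbitrary: i j)
  case 0
  then show ?case by (simp add: mid_def)
next
  case (Suc n)
  have K: "0 \<le> K"
    using assms[of 0 0] norm_ge_zero order_trans by blast
  have "norm (mpow A (Suc n) i j) \<le> (\<Sum>k<16::nat. norm (A i k * mpow A n k j))"
    unfolding mpow.simps mmul_def dim4_def by (rule norm_sum)
  also have "\<dots> \<le> (\<Sum>k<16::nat. K * (16 * K) ^ n)"
    by (rule sum_mono) (simp only: norm_mult, rule mult_mono[OF assms Suc.IH K norm_ge_zero])
  finally show ?case by simp
qed

lemma summable_mexp_series:
  assumes "\<And>i j. norm (A i j) \<le> K"
  shows "summable (\<lambda>n. (mpow A n i j / of_nat (fact n)) * z ^ n)"
proof (rule summable_comparison_test')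
  show "summable (\<lambda>n. inverse (fact n) * (16 * K * norm z) ^ n)"
    by (rule summable_exp)
  fix n :: nat
  have "norm ((mpow A n i j / of_nat (fact n)) * z ^ n) = norm (mpow A n i j) / fact n * norm z ^ n"
    by (simp add: norm_mult norm_divide norm_power)
  also have "\<dots> \<le> (16 * K) ^ n / fact n * norm z ^ n"
    by (intro mult_right_mono divide_right_mono norm_mpow_le assms) auto
  also have "\<dots> = inverse (fact n) * (16 * K * norm z) ^ n"
    by (simp add: power_mult_distrib field_simps)
  finally show "norm ((mpow A n i j / of_nat (fact n)) * z ^ n) \<le> inverse (fact n) * (16 * K * norm z) ^ n" .
qed

lemma diffs_mexp_coeffs:
  "diffs (\<lambda>n. mpow A n i j / of_nat (fact n)) n * z ^ n =
     (\<Sum>k<dim4. A i k * ((mpow A n k j / of_nat (fact n)) * z ^ n))"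
proof -
  have factorial_cancel: "of_nat (Suc n) * (x / of_nat (fact (Suc n))) = x / (of_nat (fact n) :: complex)" for x
  proof -
    have "of_nat (fact (Suc n)) = (of_nat (Suc n) * of_nat (fact n) :: complex)"
      by (simp only: fact_Suc of_nat_mult of_nat_id)
    moreover have "(of_nat (Suc n) :: complex) \<noteq> 0"
      by (simp only: of_nat_eq_0_iff)
    ultimately show ?thesis
      by simp
  qed
  show ?thesis
    unfolding diffs_def factorial_cancel
    by (simp add: mmul_def sum_distrib_right sum_distrib_left sum_divide_distrib mult_ac)
qed

lemma mexp_series_has_field_derivative:
  assumes "\<And>i j. norm (A i j) \<le> K"
  shows "(mexp_series A i j has_field_derivative (\<Sum>k<dim4. A i k * mexp_series A k j z)) (at z)"
proof -
  have "(mexp_series A i j has_field_derivative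
          (\<Sum>n. diffs (\<lambda>n. mpow A n i j / of_nat (fact n)) n * z ^ n)) (at z)"
    unfolding mexp_series_def[abs_def]
    by (rule termdiffs_strong_converges_everywhere) (rule summable_mexp_series[OF assms])
  also have "(\<Sum>n. diffs (\<lambda>n. mpow A n i j / of_nat (fact n)) n * z ^ n) =
             (\<Sum>k<dim4. \<Sum>n. A i k * ((mpow A n k j / of_nat (fact n)) * z ^ n))"
    unfolding diffs_mexp_coeffs
    by (rule suminf_sum) (intro summable_mult summable_mexp_series[OF assms])
  also have "\<dots> = (\<Sum>k<dim4. A i k * mexp_series A k j z)"
    unfolding mexp_series_def by (intro sum.cong refl suminf_mult summable_mexp_series[OF assms])
  finally show ?thesis .
qed

lemma mult_mexp_series_commute:
  assumes "\<And>i j. norm (A i j) \<le> K" "i < dim4" "j < dim4"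
  shows "(\<Sum>k<dim4. A i k * mexp_series A k j z) = (\<Sum>k<dim4. mexp_series A i k z * A k j)"
proof -
  note summable = summable_mexp_series[OF assms(1)]
  have "(\<Sum>k<dim4. A i k * mexp_series A k j z) =
        (\<Sum>n. \<Sum>k<dim4. A i k * ((mpow A n k j / of_nat (fact n)) * z ^ n))"
    unfolding mexp_series_def suminf_mult[OF summable, symmetric]
    by (rule suminf_sum[symmetric]) (intro summable_mult summable)
  also have "\<dots> = (\<Sum>n. \<Sum>k<dim4. ((mpow A n i k / of_nat (fact n)) * z ^ n) * A k j)"
  proof (rule suminf_cong)
    fix n
    have "(\<Sum>k<dim4. A i k * ((mpow A n k j / of_nat (fact n)) * z ^ n)) =
          mpow A (Suc n) i j / of_nat (fact n) * z ^ n"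
      by (simp add: mmul_def sum_distrib_right sum_distrib_left sum_divide_distrib mult_ac)
    also have "\<dots> = (\<Sum>k<dim4. ((mpow A n i k / of_nat (fact n)) * z ^ n) * A k j)"
      using mpow_Suc_right[OF assms(2,3)]
      by (simp add: sum_distrib_right sum_distrib_left sum_divide_distrib mult_ac)
    finally show "(\<Sum>k<dim4. A i k * ((mpow A n k j / of_nat (fact n)) * z ^ n)) =
                  (\<Sum>k<dim4. ((mpow A n i k / of_nat (fact n)) * z ^ n) * A k j)" .
  qed
  also have "\<dots> = (\<Sum>k<dim4. \<Sum>n. ((mpow A n i k / of_nat (fact n)) * z ^ n) * A k j)"
    by (rule suminf_sum) (intro summable_mult2 summable)
  also have "\<dots> = (\<Sum>k<dim4. mexp_series A i k z * A k j)"
    unfolding mexp_series_def by (intro sum.cong refl suminf_mult2[symmetric] summable)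
  finally show ?thesis .
qed

lemma mexp_zero_entry: "mexp (smul 0 A) i j = mid i j"
  unfolding mexp_smul_eq_series mexp_series_def powser_zero by simp

lemma mexp_path_has_vector_derivative_left:
  assumes "\<And>i j. norm (A i j) \<le> K"
  shows "((\<lambda>t. mexp (smul (c * of_real t) A) i j) has_vector_derivative
           smul c (mmul A (mexp (smul (c * of_real t) A))) i j) (at t)"
proof -
  have "((\<lambda>t. c * of_real t) has_vector_derivative c) (at t)"
    using has_vector_derivative_mult_right[OF has_vector_derivative_of_real[OF DERIV_ident], of c]
    by simp
  from field_vector_diff_chain_at[OF this mexp_series_has_field_derivative[OF assms]]
  show ?thesis
    unfolding mexp_smul_eq_series by (simp add: comp_def smul_def mmul_def)
qed

lemma mexp_path_has_vector_derivative_right: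
  assumes "\<And>i j. norm (A i j) \<le> K" "i < dim4" "j < dim4"
  shows "((\<lambda>t. mexp (smul (c * of_real t) A) i j) has_vector_derivative
           smul c (mmul (mexp (smul (c * of_real t) A)) A) i j) (at t)"
  using mexp_path_has_vector_derivative_left[OF assms(1), where c = c and t = t and i = i and j = j]
    mult_mexp_series_commute[OF assms, where z = "c * of_real t"]
  unfolding mexp_smul_eq_series by (simp add: smul_def mmul_def)

definition evolved_expect :: "cmat \<Rightarrow> cmat \<Rightarrow> real \<Rightarrow> complex" where
  "evolved_expect A M t =
     mtrace (mmul M (mmul (mexp (smul (- \<i> * of_real t) A)) (mmul rho0 (mexp (smul (\<i> * of_real t) A)))))"

lemma has_vector_derivative_mtrace_sandwich:
  assumes X: "\<And>i j. i < dim4 \<Longrightarrow> j < dim4 \<Longrightarrow> ((\<lambda>t. X t i j) has_vector_derivative X' i j) (at t)"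
    and Y: "\<And>i j. i < dim4 \<Longrightarrow> j < dim4 \<Longrightarrow> ((\<lambda>t. Y t i j) has_vector_derivative Y' i j) (at t)"
  shows "((\<lambda>t. mtrace (mmul M (mmul (X t) (mmul R (Y t))))) has_vector_derivative
           mtrace (mmul M (madd (mmul X' (mmul R (Y t))) (mmul (X t) (mmul R Y'))))) (at t)"
  unfolding mtrace_def mmul_def madd_def
  by (rule has_vector_derivative_eq_rhs,
      (rule has_vector_derivative_sum has_vector_derivative_mult_right has_vector_derivative_mult X Y | simp)+)
     (simp add: sum.distrib distrib_left distrib_right algebra_simps)

lemma evolved_expect_has_vector_derivative:
  assumes "\<And>i j. norm (A i j) \<le> K"
  shows "(evolved_expect A M has_vector_derivative evolved_expect A (icomm A M) t) (at t)"
proof -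
  let ?U = "mexp (smul (- \<i> * of_real t) A)" and ?V = "mexp (smul (\<i> * of_real t) A)"
  define G where "G = mmul ?U (mmul rho0 ?V)"
  have "(evolved_expect A M has_vector_derivative
          mtrace (mmul M (madd (mmul (smul (-\<i>) (mmul A ?U)) (mmul rho0 ?V))
                               (mmul ?U (mmul rho0 (smul \<i> (mmul ?V A))))))) (at t)"
    unfolding evolved_expect_def
    by (intro has_vector_derivative_mtrace_sandwich mexp_path_has_vector_derivative_left[OF assms]
          mexp_path_has_vector_derivative_right[OF assms])
  also have "mtrace (mmul M (madd (mmul (smul (-\<i>) (mmul A ?U)) (mmul rho0 ?V))
                                 (mmul ?U (mmul rho0 (smul \<i> (mmul ?V A)))))) =
             - \<i> * mtrace (mmul (mmul M A) G) + \<i> * mtrace (mmul M (mmul G A))"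
    by (simp add: G_def mmul_madd_right mmul_smul_left mmul_smul_right mtrace_madd mtrace_smul mmul_assoc)
  also have "mtrace (mmul M (mmul G A)) = mtrace (mmul (mmul A M) G)"
    by (metis mmul_assoc mtrace_mmul_commute)
  also have "- \<i> * mtrace (mmul (mmul M A) G) + \<i> * mtrace (mmul (mmul A M) G) =
             evolved_expect A (icomm A M) t"
    by (simp add: evolved_expect_def icomm_def G_def mmul_madd_left mmul_smul_left mtrace_madd mtrace_smul)
  finally show ?thesis .
qed

lemma evolved_expect_0: "evolved_expect A M 0 = mtrace (mmul M rho0)"
  unfolding evolved_expect_def
  by (rule mtrace_mmul_cong) (simp add: mexp_zero_entry mmul_def sum_mid_mult sum_mult_mid)

section \<open>Equal outputs have equal moments\<close>

lemma derivatives_at_0_vanish_if_vanish_on_pos: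
  fixes f :: "nat \<Rightarrow> real \<Rightarrow> 'a::real_normed_vector"
  assumes deriv: "\<And>n t. (f n has_vector_derivative f (Suc n) t) (at t)"
    and vanish: "\<And>t. t > 0 \<Longrightarrow> f 0 t = 0"
  shows "f n 0 = 0"
proof -
  have pos: "f n t = 0" if "t > 0" for n t
    using that
  proof (induction n arbitrary: t)
    case 0
    then show ?case by (rule vanish)
  next
    case (Suc n)
    have "(f n has_vector_derivative 0) (at t)"
      by (rule has_vector_derivative_transform_within_open[OF has_vector_derivative_const
            open_greaterThan, of t]) (use Suc in auto)
    then show ?case
      using vector_derivative_unique_at[OF deriv] by metis
  qed
  have "(f n \<longlongrightarrow> f n 0) (at_right 0)"
    using has_vector_derivative_continuous[OF deriv]
    by (simp add: continuous_at filterlim_at_split)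
  moreover have "(f n \<longlongrightarrow> 0) (at_right 0)"
    by (rule tendsto_eventually)
       (use eventually_at_right_less[of "0::real"] in \<open>eventually_elim, use pos in auto\<close>)
  ultimately show ?thesis
    using tendsto_unique[OF trivial_limit_at_right_real] by blast
qed

lemma yout_eq_evolved_expect: "yout h t = evolved_expect (Ham h) (tensor4 pY pZ pI pI) t"
  unfolding yout_def evolved_expect_def ..

lemma moment_eq_evolved_expect:
  "moment h n = evolved_expect (Ham h) ((heisenberg h ^^ n) (tensor4 pY pZ pI pI)) 0"
  by (simp add: moment_def evolved_expect_0)

lemma moment_eq_if_yout_eq:
  assumes "\<forall>t\<ge>0. yout h t = yout h' t"
  shows "moment h n = moment h' n"
proof -
  define f where "f n t = evolved_expect (Ham h) ((heisenberg h ^^ n) (tensor4 pY pZ pI pI)) t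
     - evolved_expect (Ham h') ((heisenberg h' ^^ n) (tensor4 pY pZ pI pI)) t" for n t
  obtain K K' where "\<And>i j. norm (Ham h i j) \<le> K" "\<And>i j. norm (Ham h' i j) \<le> K'"
    using Ham_entries_bounded by metis
  then have "(f n has_vector_derivative f (Suc n) t) (at t)" for n t
    unfolding f_def[abs_def] funpow.simps comp_def heisenberg_def
    by (intro has_vector_derivative_diff evolved_expect_has_vector_derivative)
  moreover have "f 0 t = 0" if "t > 0" for t
    using assms that by (simp add: f_def yout_eq_evolved_expect)
  ultimately have "f n 0 = 0"
    by (rule derivatives_at_0_vanish_if_vanish_on_pos)
  then show ?thesis
    by (simp add: f_def moment_eq_evolved_expect)
qed

section \<open>Identifiability\<close>

lemma params_determined_by_moments:
  fixes ha hb h1 ha' hb' h1' :: real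
  assumes "ha \<noteq> 0" "hb \<noteq> 0"
    and moments: "\<And>n. moment (ha, hb, h1) n = moment (ha', hb', h1') n"
  shows "ha = ha' \<and> hb^2 = hb'^2 \<and> h1^2 = h1'^2"
proof -
  have "- ha = - ha'"
    using moments[of 1] by (simp only: moment_1 of_real_eq_iff)
  then have ha: "ha = ha'"
    by simp
  have "ha^3 + 4*ha*hb^2 = ha'^3 + 4*ha'*hb'^2"
    using moments[of 3] by (simp only: moment_3 of_real_eq_iff)
  with ha \<open>ha \<noteq> 0\<close> have hb: "hb^2 = hb'^2"
    by simp
  have "ha^5 + 17*ha^3*hb^2 + 16*ha*(hb^2)^2 + 6*ha*hb^2*h1^2 =
        ha'^5 + 17*ha'^3*hb'^2 + 16*ha'*(hb'^2)^2 + 6*ha'*hb'^2*h1'^2"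
    using moments[of 5] by (simp only: moment_5 of_real_eq_iff neg_equal_iff_equal power_mult[symmetric]) simp
  moreover have "hb' \<noteq> 0"
    using hb \<open>hb \<noteq> 0\<close> by auto
  ultimately have "h1^2 = h1'^2"
    using ha hb \<open>ha \<noteq> 0\<close> by simp
  with ha hb show ?thesis
    by simp
qed

lemma null_sets_h_alpha_or_h_beta_0:
  "{x :: (real \<times> real \<times> real) \<times> (real \<times> real \<times> real). fst (fst x) = 0 \<or> fst (snd (fst x)) = 0}
     \<in> null_sets lebesgue"
proof -
  have "{x :: (real \<times> real \<times> real) \<times> (real \<times> real \<times> real). fst (fst x) = 0 \<or> fst (snd (fst x)) = 0} =
        {x. ((1, 0, 0), (0, 0, 0)) \<bullet> x = 0} \<union> {x. ((0, 1, 0), (0, 0, 0)) \<bullet> x = 0}"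
    by (auto simp: inner_prod_def)
  moreover have "negligible {x :: (real \<times> real \<times> real) \<times> (real \<times> real \<times> real). ((1, 0, 0), (0, 0, 0)) \<bullet> x = 0}"
    by (rule negligible_hyperplane) (simp add: zero_prod_def)
  moreover have "negligible {x :: (real \<times> real \<times> real) \<times> (real \<times> real \<times> real). ((0, 1, 0), (0, 0, 0)) \<bullet> x = 0}"
    by (rule negligible_hyperplane) (simp add: zero_prod_def)
  ultimately show ?thesis
    by (simp add: negligible_iff_null_sets[symmetric])
qed

theorem theorem2:
  shows "\<exists>N :: ((real \<times> real \<times> real) \<times> (real \<times> real \<times> real)) set.
           N \<in> null_sets lebesgue \<and>
           (\<forall>h h'. (h, h') \<notin> N \<longrightarrow>
              (\<forall>t\<ge>0. yout h t = yout h' t) \<longrightarrow>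
              fst h = fst h' \<and>
              (fst (snd h))\<^sup>2 = (fst (snd h'))\<^sup>2 \<and>
              (snd (snd h))\<^sup>2 = (snd (snd h'))\<^sup>2)"
proof (intro exI conjI allI impI)
  show "{x :: (real \<times> real \<times> real) \<times> (real \<times> real \<times> real). fst (fst x) = 0 \<or> fst (snd (fst x)) = 0}
          \<in> null_sets lebesgue"
    by (rule null_sets_h_alpha_or_h_beta_0)
  fix h h' :: "real \<times> real \<times> real"
  assume generic: "(h, h') \<notin> {x. fst (fst x) = 0 \<or> fst (snd (fst x)) = 0}"
    and outputs: "\<forall>t\<ge>0. yout h t = yout h' t"
  obtain ha hb h1 ha' hb' h1' where h: "h = (ha, hb, h1)" and h': "h' = (ha', hb', h1')"
    by (cases h, cases h') auto
  have "ha = ha' \<and> hb^2 = hb'^2 \<and> h1^2 = h1'^2"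
    using generic moment_eq_if_yout_eq[OF outputs]
    by (intro params_determined_by_moments) (auto simp: h h')
  then show "fst h = fst h'" "(fst (snd h))\<^sup>2 = (fst (snd h'))\<^sup>2" "(snd (snd h))\<^sup>2 = (snd (snd h'))\<^sup>2"
    by (simp_all add: h h')
qed

end
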